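(* Let $\boldsymbol\pi\in\Delta^{d-1}$ and $1\le k\le d-1$. Then $$\min_{\mathbf X\in\mathcal D_k}H(\mathbf X\boldsymbol\pi)=H(\boldsymbol\pi^{(k)}).$$
   Context: $H(\mathbf x)=-\sum_r x_r\log x_r$ (with $0\log0=0$). $\mathcal D_k$ is the set of matrices $\mathbf X\in\{0,1\}^{k\times d}$ in which every column has exactly one nonzero entry and every row has at least one nonzero entry. With $\pi_{[1]}\ge\pi_{[2]}\ge\dots\ge\pi_{[d]}$ the entries of $\boldsymbol\pi$ in decreasing order, $\boldsymbol\pi^{(k)}\in\Delta^{k-1}$ is defined by $\pi^{(k)}_1=\sum_{r=1}^{d-k+1}\pi_{[r]}$ and $\pi^{(k)}_l=\pi_{[d-k+l]}$ for $2\le l\le k$ (if $k\ge2$). *)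

theory Defs
  imports Main Complex_Main
begin

text \<open>Vectors of length n are functions nat => real, only indices < n matter (0-based).\<close>

definition in_simplex :: "nat \<Rightarrow> (nat \<Rightarrow> real) \<Rightarrow> bool" where
  "in_simplex d p \<longleftrightarrow> (\<forall>i<d. 0 \<le> p i) \<and> (\<Sum>i<d. p i) = 1"

definition entropy :: "nat \<Rightarrow> (nat \<Rightarrow> real) \<Rightarrow> real" where
  "entropy n x = - (\<Sum>r<n. (if x r = 0 then 0 else x r * ln (x r)))"

text \<open>k x d matrices as functions nat => nat => real, zero outside the index range.\<close>
definition D_set :: "nat \<Rightarrow> nat \<Rightarrow> (nat \<Rightarrow> nat \<Rightarrow> real) set" where
  "D_set k d = {X. (\<forall>r c. X r c = 0 \<or> X r c = 1)
                 \<and> (\<forall>r c. (k \<le> r \<or> d \<le> c) \<longrightarrow> X r c = 0)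
                 \<and> (\<forall>c<d. card {r. r < k \<and> X r c = 1} = 1)
                 \<and> (\<forall>r<k. \<exists>c<d. X r c = 1)}"

definition mat_vec :: "nat \<Rightarrow> (nat \<Rightarrow> nat \<Rightarrow> real) \<Rightarrow> (nat \<Rightarrow> real) \<Rightarrow> (nat \<Rightarrow> real)" where
  "mat_vec d X p = (\<lambda>r. \<Sum>c<d. X r c * p c)"

text \<open>Entries of p in decreasing order: sorted_desc d p ! r is pi_[r+1].\<close>
definition sorted_desc :: "nat \<Rightarrow> (nat \<Rightarrow> real) \<Rightarrow> real list" where
  "sorted_desc d p = rev (sort (map p [0..<d]))"

text \<open>pi^(k), 0-based: entry 0 is the sum of the d-k+1 largest entries,
  entry l (1 <= l < k) is pi_[d-k+l+1].\<close>
definition pi_k :: "nat \<Rightarrow> nat \<Rightarrow> (nat \<Rightarrow> real) \<Rightarrow> (nat \<Rightarrow> real)" where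
  "pi_k d k p = (\<lambda>l. if l = 0 then (\<Sum>r<d-k+1. sorted_desc d p ! r)
                     else if l < k then sorted_desc d p ! (d - k + l) else 0)"

end

theory Submission
  imports Defs "HOL-Library.FuncSet" "HOL-Combinatorics.List_Permutation"
begin

text \<open>A matrix in \<open>\<D>\<^sub>k\<close> merges the entries of \<open>\<pi>\<close> into \<open>k\<close> nonempty blocks, and
  \<open>H(X\<pi>) = - \<Sum>\<^sub>r \<phi>(q\<^sub>r)\<close> for the block sums \<open>q\<^sub>r\<close>, where \<open>\<phi>(x) = x ln x\<close>. As \<open>\<phi>\<close> is convex,
  shifting mass from a block to a heavier one never decreases \<open>\<Sum> \<phi>\<close>. Hence some optimal merge
  keeps one representative in every block but the one containing a largest entry, and
  exchanging representatives shows that they may be taken to be the \<open>k - 1\<close> smallest entries;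
  this merge produces \<open>pi_k d k p\<close>.\<close>

definition xlnx :: "real \<Rightarrow> real" where
  "xlnx x = (if x = 0 then 0 else x * ln x)"

lemma entropy_eq_sum_xlnx: "entropy n x = - (\<Sum>r<n. xlnx (x r))"
  unfolding entropy_def xlnx_def by simp

lemma xlnx_superadditive:
  assumes "0 \<le> a" "0 \<le> b"
  shows "xlnx a + xlnx b \<le> xlnx (a + b)"
proof (cases "a = 0 \<or> b = 0")
  case True
  then show ?thesis by (auto simp: xlnx_def)
next
  case False
  with assms have a: "a > 0" and b: "b > 0" by auto
  have "a * ln a + b * ln b \<le> a * ln (a + b) + b * ln (a + b)"
    using a b by (intro add_mono mult_left_mono) auto
  then show ?thesis
    using a b by (simp add: xlnx_def distrib_right)
qed

lemma xlnx_increment_mono: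
  assumes "0 \<le> u" "u \<le> v" "0 \<le> x"
  shows "xlnx (u + x) - xlnx u \<le> xlnx (v + x) - xlnx v"
proof (cases "u = 0")
  case True
  then show ?thesis
    using xlnx_superadditive[of v x] assms by (simp add: xlnx_def)
next
  case False
  with assms have u: "u > 0" by auto
  let ?G = "\<lambda>t. (t + x) * ln (t + x) - t * ln t"
  have "?G u \<le> ?G v"
  proof (rule DERIV_nonneg_imp_nondecreasing[OF assms(2)])
    fix t assume "u \<le> t" "t \<le> v"
    with u assms(3) have t: "t > 0" "t + x > 0" by auto
    then have "DERIV ?G t :> ln (t + x) - ln t"
      by (auto intro!: derivative_eq_intros simp: divide_simps)
    moreover have "ln (t + x) - ln t \<ge> 0"
      using t assms(3) by simp
    ultimately show "\<exists>y. DERIV ?G t :> y \<and> y \<ge> 0" by blast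
  qed
  then show ?thesis
    using u assms by (simp add: xlnx_def)
qed

lemma xlnx_sum_transfer:
  assumes "finite J" "0 \<le> a" "\<forall>j\<in>J. 0 \<le> c j \<and> c j \<le> b j \<and> c j \<le> a"
  shows "xlnx a + (\<Sum>j\<in>J. xlnx (b j)) \<le> xlnx (a + (\<Sum>j\<in>J. b j - c j)) + (\<Sum>j\<in>J. xlnx (c j))"
  using assms(1,3)
proof (induction J rule: finite_induct)
  case empty
  then show ?case by simp
next
  case (insert j F)
  let ?A = "a + (\<Sum>j\<in>F. b j - c j)"
  have A: "a \<le> ?A"
    using insert by (intro add_increasing2 sum_nonneg) auto
  have "xlnx (c j + (b j - c j)) - xlnx (c j) \<le> xlnx (?A + (b j - c j)) - xlnx ?A"
    using insert A by (intro xlnx_increment_mono) auto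
  then show ?case
    using insert by (simp add: algebra_simps)
qed

lemma xlnx_exchange_smallest:
  fixes p :: "'a \<Rightarrow> real"
  assumes A: "finite A" and nonneg: "\<forall>a\<in>A. 0 \<le> p a" and S: "S \<subseteq> A"
    and small: "\<forall>i\<in>S. \<forall>j\<in>A - S. p i \<le> p j"
    and R: "R \<subseteq> A" "card R = card S"
  shows "xlnx (sum p A - sum p R) + (\<Sum>i\<in>R. xlnx (p i))
         \<le> xlnx (sum p A - sum p S) + (\<Sum>i\<in>S. xlnx (p i))"
  using R
proof (induction "card (R - S)" arbitrary: R)
  case 0
  have fin: "finite R" "finite S"
    using 0 S A finite_subset by blast+
  with 0 have "R \<subseteq> S" by auto
  with 0 fin have "R = S"
    using card_subset_eq by blast
  then show ?case by simp
next
  case (Suc n R)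
  have fin: "finite R" "finite S"
    using Suc S A finite_subset by blast+
  have "R - S \<noteq> {}"
    using Suc(2) by (metis card.empty nat.distinct(1))
  then obtain i where i: "i \<in> R" "i \<notin> S" by blast
  have "card (S - R) = card (R - S)"
    using Suc(4) fin by (simp add: card_Diff_subset_Int Int_commute)
  then have "S - R \<noteq> {}"
    using Suc(2) by (metis card.empty nat.distinct(1))
  then obtain j where j: "j \<in> S" "j \<notin> R" by blast
  define R' where "R' = insert j (R - {i})"
  have "R' - S = (R - S) - {i}"
    using j unfolding R'_def by auto
  then have card_R'_S: "card (R' - S) = n"
    using Suc(2) i fin by simp
  have "card R > 0"
    using fin i card_gt_0_iff by blast
  then have R': "R' \<subseteq> A" "card R' = card S"
    using Suc(3,4) i j S fin unfolding R'_def by (auto simp: card_Suc_Diff1)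
  have IH: "xlnx (sum p A - sum p R') + (\<Sum>i\<in>R'. xlnx (p i))
      \<le> xlnx (sum p A - sum p S) + (\<Sum>i\<in>S. xlnx (p i))"
    using Suc(1)[OF card_R'_S[symmetric] R'] .
  define B where "B = sum p A - sum p R"
  have "B = sum p (A - R)"
    unfolding B_def using Suc(3) A by (simp add: sum_diff)
  then have "p j \<le> B"
    using A j S nonneg by (auto intro!: member_le_sum)
  moreover have "p j \<le> p i"
    using small i j Suc(3) by auto
  ultimately have "xlnx (p j + (p i - p j)) - xlnx (p j) \<le> xlnx (B + (p i - p j)) - xlnx B"
    using nonneg j S by (intro xlnx_increment_mono) auto
  moreover have "sum p A - sum p R' = B + (p i - p j)"
    unfolding R'_def B_def using fin i j by (simp add: sum_diff1)
  ultimately have "xlnx B + xlnx (p i) \<le> xlnx (sum p A - sum p R') + xlnx (p j)"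
    by simp
  moreover have "(\<Sum>i\<in>R'. xlnx (p i)) = (\<Sum>i\<in>R. xlnx (p i)) - xlnx (p i) + xlnx (p j)"
    unfolding R'_def using fin i j by (simp add: sum_diff1)
  ultimately show ?case
    using IH unfolding B_def by linarith
qed

text \<open>Move everything except one representative of each block into the block of a largest
  element, then exchange the representatives for the \<open>card B - 1\<close> smallest elements.\<close>
lemma xlnx_fibre_sums_le:
  fixes p :: "'a \<Rightarrow> real" and g :: "'a \<Rightarrow> 'b"
  assumes A: "finite A" and nonneg: "\<forall>a\<in>A. 0 \<le> p a" and surj: "g ` A = B"
    and S: "S \<subseteq> A" "card S = card B - 1" and small: "\<forall>i\<in>S. \<forall>j\<in>A - S. p i \<le> p j"
  shows "(\<Sum>b\<in>B. xlnx (sum p {a\<in>A. g a = b})) \<le> xlnx (sum p A - sum p S) + (\<Sum>i\<in>S. xlnx (p i))"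
proof (cases "A = {}")
  case True
  with surj S show ?thesis by (simp add: xlnx_def)
next
  case False
  define q where "q b = sum p {a\<in>A. g a = b}" for b
  have "Max (p ` A) \<in> p ` A"
    using A False by simp
  then obtain a0 where "a0 \<in> A" "p a0 = Max (p ` A)"
    by auto
  then have a0: "a0 \<in> A" "\<forall>a\<in>A. p a \<le> p a0"
    using A by auto
  define b0 where "b0 = g a0"
  have block_ge: "p a \<le> q (g a)" if "a \<in> A" for a
    unfolding q_def using A that nonneg by (intro member_le_sum) auto
  have "\<forall>b\<in>B. \<exists>a. a \<in> A \<and> g a = b"
    using surj by auto
  then obtain m where m: "\<forall>b\<in>B. m b \<in> A \<and> g (m b) = b"
    by metis
  define J where "J = B - {b0}"
  have finB: "finite B" "b0 \<in> B"
    using A surj a0 unfolding b0_def by auto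
  have transfer: "xlnx (q b0) + (\<Sum>b\<in>J. xlnx (q b))
      \<le> xlnx (q b0 + (\<Sum>b\<in>J. q b - p (m b))) + (\<Sum>b\<in>J. xlnx (p (m b)))"
  proof (rule xlnx_sum_transfer)
    show "0 \<le> q b0"
      using block_ge[OF a0(1)] nonneg a0 unfolding b0_def by force
    show "\<forall>b\<in>J. 0 \<le> p (m b) \<and> p (m b) \<le> q b \<and> p (m b) \<le> q b0"
    proof
      fix b assume "b \<in> J"
      then have "m b \<in> A" "g (m b) = b"
        using m unfolding J_def by auto
      then show "0 \<le> p (m b) \<and> p (m b) \<le> q b \<and> p (m b) \<le> q b0"
        using nonneg block_ge[of "m b"] block_ge[OF a0(1)] a0(2) unfolding b0_def by fastforce
    qed
  qed (use finB J_def in simp)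
  have "sum q B = sum p A"
    unfolding q_def using A finB surj by (intro sum.group) auto
  then have total: "q b0 + sum q J = sum p A"
    unfolding J_def using finB by (simp add: sum.remove)
  have inj: "inj_on m J"
    using m unfolding J_def by (intro inj_onI) (metis Diff_iff)
  define R where "R = m ` J"
  have "xlnx (sum p A - sum p R) + (\<Sum>i\<in>R. xlnx (p i))
      \<le> xlnx (sum p A - sum p S) + (\<Sum>i\<in>S. xlnx (p i))"
  proof (rule xlnx_exchange_smallest[OF A nonneg S(1) small])
    show "R \<subseteq> A"
      using m unfolding R_def J_def by auto
    show "card R = card S"
      using inj finB S(2) unfolding R_def J_def by (simp add: card_image)
  qed
  moreover have "sum p R = (\<Sum>b\<in>J. p (m b))" "(\<Sum>i\<in>R. xlnx (p i)) = (\<Sum>b\<in>J. xlnx (p (m b)))"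
    unfolding R_def using inj by (simp_all add: sum.reindex)
  moreover have "(\<Sum>b\<in>B. xlnx (q b)) = xlnx (q b0) + (\<Sum>b\<in>J. xlnx (q b))"
    unfolding J_def using finB by (simp add: sum.remove)
  ultimately show ?thesis
    using transfer total by (simp add: q_def sum_subtractf algebra_simps)
qed

lemma xlnx_fibre_sums_singletons:
  fixes p :: "'a \<Rightarrow> real" and g :: "'a \<Rightarrow> 'b" and A :: "'a set" and b0 :: 'b
  defines "S \<equiv> {a\<in>A. g a \<noteq> b0}"
  assumes A: "finite A" and surj: "g ` A = B" and "b0 \<in> B" and inj: "inj_on g S"
  shows "(\<Sum>b\<in>B. xlnx (sum p {a\<in>A. g a = b})) = xlnx (sum p A - sum p S) + (\<Sum>a\<in>S. xlnx (p a))"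
proof -
  have B: "B = insert b0 (g ` S)" "b0 \<notin> g ` S" "finite (g ` S)"
    using surj \<open>b0 \<in> B\<close> A unfolding S_def by auto
  have "{a\<in>A. g a = b0} = A - S"
    unfolding S_def by auto
  then have "sum p {a\<in>A. g a = b0} = sum p A - sum p S"
    using A unfolding S_def by (simp add: sum_diff)
  moreover have "{a'\<in>A. g a' = g a} = {a}" if "a \<in> S" for a
    using inj that unfolding S_def by (auto simp: inj_on_def)
  ultimately show ?thesis
    using B inj by (simp add: sum.reindex)
qed

definition block_matrix :: "nat \<Rightarrow> nat \<Rightarrow> (nat \<Rightarrow> nat) \<Rightarrow> nat \<Rightarrow> nat \<Rightarrow> real" where
  "block_matrix k d g r c = (if r < k \<and> c < d \<and> g c = r then 1 else 0)"

lemma mat_vec_block_matrix: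
  assumes "r < k"
  shows "mat_vec d (block_matrix k d g) p r = sum p {c\<in>{..<d}. g c = r}"
proof -
  have "mat_vec d (block_matrix k d g) p r = (\<Sum>c<d. if g c = r then p c else 0)"
    unfolding mat_vec_def block_matrix_def using assms by (intro sum.cong) auto
  also have "\<dots> = sum p {c\<in>{..<d}. g c = r}"
    by (rule sum.inter_filter[symmetric]) simp
  finally show ?thesis .
qed

lemma entropy_mat_vec_block_matrix:
  "entropy k (mat_vec d (block_matrix k d g) p) = - (\<Sum>r<k. xlnx (sum p {c\<in>{..<d}. g c = r}))"
  unfolding entropy_eq_sum_xlnx by (simp add: mat_vec_block_matrix)

lemma block_matrix_in_D_set:
  assumes "g ` {..<d} = {..<k}"
  shows "block_matrix k d g \<in> D_set k d"
  unfolding D_set_def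
proof (intro CollectI conjI allI impI)
  fix c assume "c < d"
  then have "{r. r < k \<and> block_matrix k d g r c = 1} = {g c}"
    using assms unfolding block_matrix_def by auto
  then show "card {r. r < k \<and> block_matrix k d g r c = 1} = 1"
    by simp
next
  fix r assume "r < k"
  then show "\<exists>c<d. block_matrix k d g r c = 1"
    using assms unfolding block_matrix_def by (metis imageE lessThan_iff)
qed (auto simp: block_matrix_def)

lemma D_set_obtain_block_matrix:
  assumes "X \<in> D_set k d"
  obtains g where "g \<in> {..<d} \<rightarrow>\<^sub>E {..<k}" "g ` {..<d} = {..<k}" "X = block_matrix k d g"
proof
  have X01: "X r c = 0 \<or> X r c = 1" and X0: "k \<le> r \<or> d \<le> c \<Longrightarrow> X r c = 0" for r c
    using assms unfolding D_set_def by auto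
  have unique: "\<exists>!r. r < k \<and> X r c = 1" if "c < d" for c
  proof -
    have "card {r. r < k \<and> X r c = 1} = 1"
      using assms that unfolding D_set_def by auto
    then obtain r where "{r. r < k \<and> X r c = 1} = {r}"
      by (rule card_1_singletonE)
    then have "r' < k \<and> X r' c = 1 \<longleftrightarrow> r' = r" for r'
      by (simp add: set_eq_iff)
    then show ?thesis
      by (intro ex1I[of _ r]) auto
  qed
  define g where "g c = (if c < d then THE r. r < k \<and> X r c = 1 else undefined)" for c
  have g_row: "g c < k \<and> X (g c) c = 1" if "c < d" for c
    using theI'[OF unique[OF that]] that unfolding g_def by simp
  have g: "g c < k" "X r c = 1 \<longleftrightarrow> r < k \<and> r = g c" if "c < d" for c r
    using g_row[OF that] unique[OF that] X0[of r c] by force+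
  have "g c = undefined" if "\<not> c < d" for c
    using that unfolding g_def by simp
  then show "g \<in> {..<d} \<rightarrow>\<^sub>E {..<k}"
    using g by (auto simp: PiE_iff extensional_def)
  show "X = block_matrix k d g"
  proof (intro ext)
    fix r c
    show "X r c = block_matrix k d g r c"
      using X01[of r c] X0[of r c] g(2)[of c r] unfolding block_matrix_def by (cases "c < d") auto
  qed
  show "g ` {..<d} = {..<k}"
  proof
    show "g ` {..<d} \<subseteq> {..<k}"
      using g by auto
    show "{..<k} \<subseteq> g ` {..<d}"
    proof
      fix r assume "r \<in> {..<k}"
      then obtain c where "c < d" "X r c = 1"
        using assms unfolding D_set_def by auto
      then show "r \<in> g ` {..<d}"
        using g by auto
    qed
  qed
qed

lemma finite_D_set: "finite (D_set k d)"
proof (rule finite_subset)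
  show "D_set k d \<subseteq> block_matrix k d ` ({..<d} \<rightarrow>\<^sub>E {..<k})"
    by (auto elim!: D_set_obtain_block_matrix)
qed (simp add: finite_PiE)

lemma sorted_desc_permutation:
  obtains \<sigma> where "bij_betw \<sigma> {..<d} {..<d}" "\<forall>i<d. sorted_desc d p ! i = p (\<sigma> i)"
proof -
  have "sorted_desc d p <~~> map p [0..<d]"
    unfolding sorted_desc_def by simp
  from permutation_Ex_bij[OF this] obtain f where
    "bij_betw f {..<length (sorted_desc d p)} {..<length (map p [0..<d])}"
    "\<forall>i<length (sorted_desc d p). sorted_desc d p ! i = map p [0..<d] ! f i"
    by blast
  moreover have "length (sorted_desc d p) = d"
    unfolding sorted_desc_def by simp
  ultimately have f: "bij_betw f {..<d} {..<d}" "\<forall>i<d. sorted_desc d p ! i = map p [0..<d] ! f i"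
    by simp_all
  moreover have "f i < d" if "i < d" for i
    using bij_betw_apply[OF f(1)] that by simp
  ultimately show ?thesis
    using that by simp
qed

lemma sorted_desc_antimono:
  assumes "i \<le> j" "j < d"
  shows "sorted_desc d p ! j \<le> sorted_desc d p ! i"
proof -
  let ?L = "sort (map p [0..<d])"
  have "rev ?L ! j = ?L ! (d - Suc j)" "rev ?L ! i = ?L ! (d - Suc i)"
    using assms by (auto simp: rev_nth)
  moreover have "?L ! (d - Suc j) \<le> ?L ! (d - Suc i)"
    using assms by (intro sorted_nth_mono) auto
  ultimately show ?thesis
    unfolding sorted_desc_def by simp
qed

definition pi_k_block :: "nat \<Rightarrow> nat \<Rightarrow> nat \<Rightarrow> nat" where
  "pi_k_block d k i = (if i \<le> d - k then 0 else i - (d - k))"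

lemma pi_k_block_image:
  assumes "1 \<le> k" "k < d"
  shows "pi_k_block d k ` {..<d} = {..<k}"
proof
  show "pi_k_block d k ` {..<d} \<subseteq> {..<k}"
    using assms unfolding pi_k_block_def by auto
  show "{..<k} \<subseteq> pi_k_block d k ` {..<d}"
  proof
    fix r assume "r \<in> {..<k}"
    then have "pi_k_block d k (if r = 0 then 0 else d - k + r) = r"
      "(if r = 0 then 0 else d - k + r) < d"
      using assms unfolding pi_k_block_def by auto
    then show "r \<in> pi_k_block d k ` {..<d}"
      by (metis imageI lessThan_iff)
  qed
qed

lemma pi_k_eq_sum_pi_k_block:
  assumes "r < k" "k < d"
  shows "pi_k d k p r = (\<Sum>i\<in>{i\<in>{..<d}. pi_k_block d k i = r}. sorted_desc d p ! i)"
proof (cases "r = 0")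
  case True
  have "{i\<in>{..<d}. pi_k_block d k i = 0} = {..<d - k + 1}"
    using assms unfolding pi_k_block_def by auto
  then show ?thesis
    using True unfolding pi_k_def by simp
next
  case False
  have "{i\<in>{..<d}. pi_k_block d k i = r} = {d - k + r}"
    using assms False unfolding pi_k_block_def by auto
  then show ?thesis
    using assms False unfolding pi_k_def by simp
qed

lemma blocks_comp_the_inv_into:
  assumes "bij_betw \<sigma> A A"
  shows "{c\<in>A. P ((h \<circ> the_inv_into A \<sigma>) c)} = \<sigma> ` {i\<in>A. P (h i)}"
proof -
  have "{c\<in>A. P ((h \<circ> the_inv_into A \<sigma>) c)} = {c\<in>\<sigma> ` A. P ((h \<circ> the_inv_into A \<sigma>) c)}"
    using assms by (simp add: bij_betw_def)
  also have "\<dots> = \<sigma> ` {i\<in>A. P ((h \<circ> the_inv_into A \<sigma>) (\<sigma> i))}"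
    by auto
  also have "\<dots> = \<sigma> ` {i\<in>A. P (h i)}"
    using assms by (auto simp: bij_betw_def the_inv_into_f_f)
  finally show ?thesis .
qed

text \<open>The partition realising \<open>pi_k d k p\<close>: the \<open>d - k + 1\<close> largest entries form block \<open>0\<close>, each
  of the \<open>k - 1\<close> smallest entries is a block of its own.\<close>
lemma pi_k_optimal_partition:
  assumes "1 \<le> k" "k < d"
  obtains g :: "nat \<Rightarrow> nat" where "g ` {..<d} = {..<k}"
    and "inj_on g {c\<in>{..<d}. g c \<noteq> 0}" and "card {c\<in>{..<d}. g c \<noteq> 0} = k - 1"
    and "\<forall>i\<in>{c\<in>{..<d}. g c \<noteq> 0}. \<forall>j\<in>{..<d} - {c\<in>{..<d}. g c \<noteq> 0}. p i \<le> p j"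
    and "\<forall>r<k. pi_k d k p r = sum p {c\<in>{..<d}. g c = r}"
proof -
  obtain \<sigma> where \<sigma>: "bij_betw \<sigma> {..<d} {..<d}" and s\<sigma>: "\<forall>i<d. sorted_desc d p ! i = p (\<sigma> i)"
    by (rule sorted_desc_permutation)
  define h where "h = pi_k_block d k"
  define g where "g = h \<circ> the_inv_into {..<d} \<sigma>"
  note blocks = blocks_comp_the_inv_into[OF \<sigma>, of _ h, folded g_def]
  have inj_\<sigma>: "inj_on \<sigma> B" if "B \<subseteq> {..<d}" for B
    using bij_betw_imp_inj_on[OF \<sigma>] that by (rule inj_on_subset)
  have "g ` {..<d} = h ` the_inv_into {..<d} \<sigma> ` {..<d}"
    unfolding g_def by (simp add: image_comp)
  also have "\<dots> = {..<k}"
    using bij_betw_the_inv_into[OF \<sigma>] pi_k_block_image[OF assms]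
    unfolding h_def by (simp add: bij_betw_def)
  finally have g_image: "g ` {..<d} = {..<k}" .
  define T where "T = {d - k<..<d}"
  have "{i\<in>{..<d}. h i \<noteq> 0} = T"
    unfolding T_def h_def pi_k_block_def by auto
  then have nonzero: "{c\<in>{..<d}. g c \<noteq> 0} = \<sigma> ` T"
    using blocks[of "\<lambda>r. r \<noteq> 0"] by simp
  have "{..<d} - \<sigma> ` T = {c\<in>{..<d}. g c = 0}"
    unfolding nonzero[symmetric] by auto
  also have "{i\<in>{..<d}. h i = 0} = {..d - k}"
    using assms unfolding h_def pi_k_block_def by auto
  then have "{c\<in>{..<d}. g c = 0} = \<sigma> ` {..d - k}"
    using blocks[of "\<lambda>r. r = 0"] by simp
  finally have zero: "{..<d} - \<sigma> ` T = \<sigma> ` {..d - k}" .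
  have "inj_on (g \<circ> \<sigma>) T"
    using \<sigma> unfolding T_def g_def h_def pi_k_block_def
    by (auto simp: inj_on_def bij_betw_def the_inv_into_f_f)
  then have inj: "inj_on g (\<sigma> ` T)"
    by (rule inj_on_imageI)
  have "inj_on \<sigma> T"
    by (rule inj_\<sigma>) (auto simp: T_def)
  then have card: "card (\<sigma> ` T) = k - 1"
    using assms by (simp add: card_image T_def)
  have small: "\<forall>i\<in>\<sigma> ` T. \<forall>j\<in>\<sigma> ` {..d - k}. p i \<le> p j"
    using s\<sigma> sorted_desc_antimono[of _ _ d p] assms unfolding T_def by fastforce
  have "pi_k d k p r = sum p {c\<in>{..<d}. g c = r}" if "r < k" for r
  proof -
    have "inj_on \<sigma> {i\<in>{..<d}. h i = r}"
      by (rule inj_\<sigma>) auto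
    then show ?thesis
      unfolding pi_k_eq_sum_pi_k_block[OF that assms(2)] blocks[of "\<lambda>r'. r' = r"]
      using s\<sigma> by (simp add: sum.reindex h_def)
  qed
  then show ?thesis
    using inj card small by (intro that[OF g_image, unfolded nonzero zero]) auto
qed

theorem mainTheorem4:
  fixes d k :: nat and p :: "nat \<Rightarrow> real"
  assumes "in_simplex d p" and "1 \<le> k" and "k \<le> d - 1"
  shows "Min ((\<lambda>X. entropy k (mat_vec d X p)) ` D_set k d) = entropy k (pi_k d k p)"
proof -
  have nonneg: "\<forall>i\<in>{..<d}. 0 \<le> p i" and total: "sum p {..<d} = 1"
    using assms(1) unfolding in_simplex_def by auto
  have k: "1 \<le> k" "k < d"
    using assms(2,3) by auto
  obtain g0 where g0: "g0 ` {..<d} = {..<k}" "inj_on g0 {c\<in>{..<d}. g0 c \<noteq> 0}"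
    "card {c\<in>{..<d}. g0 c \<noteq> 0} = k - 1"
    "\<forall>i\<in>{c\<in>{..<d}. g0 c \<noteq> 0}. \<forall>j\<in>{..<d} - {c\<in>{..<d}. g0 c \<noteq> 0}. p i \<le> p j"
    "\<forall>r<k. pi_k d k p r = sum p {c\<in>{..<d}. g0 c = r}"
    using pi_k_optimal_partition[OF k] by blast
  define S where "S = {c\<in>{..<d}. g0 c \<noteq> 0}"
  have attained: "entropy k (pi_k d k p) = entropy k (mat_vec d (block_matrix k d g0) p)"
    unfolding entropy_mat_vec_block_matrix unfolding entropy_eq_sum_xlnx using g0(5) by simp
  also have "\<dots> = - (xlnx (1 - sum p S) + (\<Sum>i\<in>S. xlnx (p i)))"
    using xlnx_fibre_sums_singletons[of "{..<d}" g0 "{..<k}" 0 p] g0(1,2) k total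
    unfolding S_def entropy_mat_vec_block_matrix by simp
  finally have optimum: "entropy k (pi_k d k p) = - (xlnx (1 - sum p S) + (\<Sum>i\<in>S. xlnx (p i)))" .
  have lower: "entropy k (pi_k d k p) \<le> entropy k (mat_vec d X p)" if X: "X \<in> D_set k d" for X
  proof -
    obtain g where g: "g ` {..<d} = {..<k}" "X = block_matrix k d g"
      using D_set_obtain_block_matrix[OF X] by blast
    have "(\<Sum>r<k. xlnx (sum p {c\<in>{..<d}. g c = r})) \<le> xlnx (1 - sum p S) + (\<Sum>i\<in>S. xlnx (p i))"
      using xlnx_fibre_sums_le[OF finite_lessThan nonneg g(1), of S] g0(3,4) total
      unfolding S_def by auto
    then show ?thesis
      unfolding optimum g(2) entropy_mat_vec_block_matrix by simp
  qed
  show ?thesis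
    using finite_D_set block_matrix_in_D_set[OF g0(1)] attained lower by (intro Min_eqI) auto
qed

end
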